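(* In the disclosure game described in the context, for any information structure $(X,\pi^S)$ with $\varnothing\notin X$, an equilibrium exists, and in every equilibrium $(\sigma,(\mu^B_m))$ the distribution of Buyer's posterior mean $q^B_{\sigma(x)}$ (with $x$ distributed according to the signal distribution) equals $\mu^S$.
   Context: Let $0<q_\ell<q_h<\infty$, $Q=[q_\ell,q_h]$, and let $c$ be a real number with $0<c<q_\ell$. Let $F$ be a probability distribution on $[0,1]$ with support $[0,1]$ admitting a twice continuously differentiable density $f:(0,1)\to\mathbb{R}_{>0}$. Define $r(v)=(1-F(v))/f(v)$ and $\psi(v)=v-r(v)$ on $(0,1)$, and assume $\psi'(v)>0$ whenever $\psi(v)>0$. For $q\in Q$, $p(q)$ is the unique maximizer over $p\in\mathbb{R}$ of $(p-c)\big(1-F(p/q)\big)$, and let $R(q)=(p(q)-c)\big(1-F(p(q)/q)\big)$. The quality $q$ is drawn from a prior $\mu\in\Delta(Q)$ with support $Q$. Seller's information structure $(X,\pi^S)$ consists of a measurable signal space $X$ with $\varnothing\notin X$ and $\pi^S:Q\to\Delta(X)$; on observing $x$, Seller forms the Bayesian posterior $\mu^S_x$, and $\mu^S$ is the distribution of $\mathbb{E}_{\mu^S_x}[q]$. A disclosure strategy is a measurable $\sigma:X\to X\cup\{\varnothing\}$ with $\sigma(x)\in\{x,\varnothing\}$ for all $x$. Buyer's beliefs are $(\mu^B_m)_{m\in X\cup\{\varnothing\}}$ with posterior means $q^B_m=\mathbb{E}_{\mu^B_m}[q]$. A pair $(\sigma,(\mu^B_m))$ is an equilibrium if (i) for every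 $x\in X$, $\sigma(x)\in\arg\max_{m\in\{x,\varnothing\}} R(q^B_m)$; and (ii) $\mu^B_m=\mu^S_m$ for $m\in X$, and $\mu^B_\varnothing=\mathbb{E}[\mu^S_x\mid\sigma(x)=\varnothing]$ when this conditional expectation is well defined (otherwise $\mu^B_\varnothing$ is arbitrary). *)

theory Defs
  imports "HOL-Probability.Probability"
begin

definition measure_support :: "real measure \<Rightarrow> real set" where
  "measure_support M = \<Inter>{S. closed S \<and> emeasure M (UNIV - S) = 0}"

definition rr :: "(real \<Rightarrow> real) \<Rightarrow> (real \<Rightarrow> real) \<Rightarrow> real \<Rightarrow> real" where
  "rr F f v = (1 - F v) / f v"

definition virt :: "(real \<Rightarrow> real) \<Rightarrow> (real \<Rightarrow> real) \<Rightarrow> real \<Rightarrow> real" where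
  "virt F f v = v - rr F f v"

definition profit :: "real \<Rightarrow> (real \<Rightarrow> real) \<Rightarrow> real \<Rightarrow> real \<Rightarrow> real" where
  "profit c F q p = (p - c) * (1 - F (p / q))"

definition price :: "real \<Rightarrow> (real \<Rightarrow> real) \<Rightarrow> real \<Rightarrow> real" where
  "price c F q = (THE p. \<forall>p'. profit c F q p' \<le> profit c F q p)"

definition RR :: "real \<Rightarrow> (real \<Rightarrow> real) \<Rightarrow> real \<Rightarrow> real" where
  "RR c F q = profit c F q (price c F q)"

definition dist_on :: "real set \<Rightarrow> real measure \<Rightarrow> bool" where
  "dist_on Q M \<longleftrightarrow> prob_space M \<and> sets M = sets borel \<and> emeasure M Q = 1"

definition pmean :: "real measure \<Rightarrow> real" where
  "pmean M = (\<integral>q. q \<partial>M)"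

definition signal_dist :: "real measure \<Rightarrow> (real \<Rightarrow> 'x measure) \<Rightarrow> 'x measure" where
  "signal_dist mu piS = mu \<bind> piS"

text \<open>Bayesian posterior kernel: the joint law of (q,x) computed from prior and
  signal kernel coincides with the one computed from the signal marginal and
  the posterior kernel (Bayes' rule / disintegration).\<close>
definition bayes_posterior ::
  "real measure \<Rightarrow> 'x measure \<Rightarrow> (real \<Rightarrow> 'x measure) \<Rightarrow> ('x \<Rightarrow> real measure) \<Rightarrow> bool" where
  "bayes_posterior mu SX piS K \<longleftrightarrow>
     K \<in> measurable SX (prob_algebra borel) \<and>
     signal_dist mu piS \<bind> (\<lambda>x. K x \<bind> (\<lambda>q. return (borel \<Otimes>\<^sub>M SX) (q, x)))
       = mu \<bind> (\<lambda>q. piS q \<bind> (\<lambda>x. return (borel \<Otimes>\<^sub>M SX) (q, x)))"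

definition seller_means :: "real measure \<Rightarrow> (real \<Rightarrow> 'x measure) \<Rightarrow> ('x \<Rightarrow> real measure) \<Rightarrow> real measure" where
  "seller_means mu piS K = distr (signal_dist mu piS) borel (\<lambda>x. pmean (K x))"

text \<open>Disclosure strategy: messages are 'x option, with None standing for
  the empty message. sig x is Some x (disclose) or None (conceal); measurability
  w.r.t. the disjoint-union sig-algebra on X + {empty} amounts to measurability of
  the concealment set.\<close>
definition disclosure_strategy :: "'x measure \<Rightarrow> ('x \<Rightarrow> 'x option) \<Rightarrow> bool" where
  "disclosure_strategy SX sig \<longleftrightarrow>
     (\<forall>x\<in>space SX. sig x = Some x \<or> sig x = None) \<and>
     {x\<in>space SX. sig x = None} \<in> sets SX"

definition cond_mixture :: "'x measure \<Rightarrow> ('x \<Rightarrow> real measure) \<Rightarrow> 'x set \<Rightarrow> real measure" where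
  "cond_mixture nu K D = density nu (\<lambda>x. indicator D x / emeasure nu D) \<bind> K"

definition equilibrium ::
  "real \<Rightarrow> (real \<Rightarrow> real) \<Rightarrow> real set \<Rightarrow> real measure \<Rightarrow> 'x measure \<Rightarrow> (real \<Rightarrow> 'x measure)
   \<Rightarrow> ('x \<Rightarrow> real measure) \<Rightarrow> ('x \<Rightarrow> 'x option) \<Rightarrow> ('x option \<Rightarrow> real measure) \<Rightarrow> bool" where
  "equilibrium c F Q mu SX piS K sig muB \<longleftrightarrow>
     disclosure_strategy SX sig \<and>
     \<comment> \<open>(i) optimality of disclosure\<close>
     (\<forall>x\<in>space SX. RR c F (pmean (muB (sig x))) =
         max (RR c F (pmean (muB (Some x)))) (RR c F (pmean (muB None)))) \<and>
     \<comment> \<open>(ii) consistency of beliefs\<close>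
     (\<forall>x\<in>space SX. muB (Some x) = K x) \<and>
     dist_on Q (muB None) \<and>
     (let D = {x\<in>space SX. sig x = None} in
        emeasure (signal_dist mu piS) D > 0 \<longrightarrow>
          muB None = cond_mixture (signal_dist mu piS) K D)"

end

theory Submission
  imports Defs
begin

text \<open>Seller's revenue \<open>R(q)\<close> is strictly increasing in the expected quality \<open>q > c\<close>: the
  optimal price is unique because the first-order condition \<open>\<psi>(p/q) = c/q\<close> can only be
  crossed upward, and at a fixed price a higher \<open>q\<close> lowers the probability \<open>F(p/q)\<close> of no
  sale. Hence full disclosure, with the sceptical off-path belief \<open>q\<^sub>\<ell>\<close>, is an equilibrium.
  In any equilibrium, every concealed signal has posterior mean at most Buyer's mean belief
  after concealment, while consistency makes that belief the average of the concealed
  posterior means; so they coincide almost surely, and Buyer's posterior mean equals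
  Seller's almost surely.\<close>

text \<open>Since \<open>g > k\<close> just right of \<open>a\<close>, the first later point \<open>w\<close> where \<open>g\<close> is back at \<open>k\<close>
  is reached from above, which contradicts \<open>g'(w) > 0\<close>.\<close>
lemma upcrossing_unique:
  fixes g :: "real \<Rightarrow> real"
  assumes "a \<le> b" and g_cont: "continuous_on {a..b} g" and ga: "g a = k" and gb: "g b = k"
    and up: "\<And>v. v \<in> {a..b} \<Longrightarrow> g v = k \<Longrightarrow> \<exists>d>0. (g has_real_derivative d) (at v)"
  shows "a = b"
proof (rule ccontr)
  assume "a \<noteq> b"
  with \<open>a \<le> b\<close> have ab: "a < b" by simp
  obtain d where "d > 0" "(g has_real_derivative d) (at a)" using up[of a] ga ab by auto
  then obtain r where r: "r > 0" "\<And>h. 0 < h \<Longrightarrow> h < r \<Longrightarrow> g a < g (a + h)"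
    using DERIV_pos_inc_right by blast
  define e where "e = min (r/2) ((b-a)/2)"
  have e: "0 < e" "e < r" "a + e < b"
    using r(1) ab by (auto simp: e_def min_def field_simps)
  then have gae: "k < g (a + e)" using r(2) ga by simp
  define S where "S = {a+e..b} \<inter> g -` {..k}"
  have "closed S" unfolding S_def
    by (rule continuous_closed_preimage) (use e(1) in \<open>auto intro: continuous_on_subset[OF g_cont]\<close>)
  moreover have "b \<in> S" "bdd_below S"
    using e gb by (auto simp: S_def intro: bdd_belowI[of _ "a+e"])
  ultimately have wS: "Inf S \<in> S" and w_least: "\<And>v. v \<in> S \<Longrightarrow> Inf S \<le> v"
    using closed_contains_Inf cInf_lower by blast+
  define w where "w = Inf S"
  have w: "a + e \<le> w" "w \<le> b" "g w \<le> k" using wS by (auto simp: S_def w_def)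
  obtain x where x: "a + e \<le> x" "x \<le> w" "g x = k"
    using IVT2'[of g w k "a+e"] w gae e(1) continuous_on_subset[OF g_cont] by force
  then have "x \<in> S" using w by (auto simp: S_def)
  then have gw: "g w = k" using w_least x unfolding w_def by force
  then have "a + e < w" using gae w(1) by (cases "w = a + e") auto
  obtain d' where "d' > 0" "(g has_real_derivative d') (at w)" using up[of w] gw w e by auto
  then obtain r' where r': "r' > 0" "\<And>h. 0 < h \<Longrightarrow> h < r' \<Longrightarrow> g (w - h) < g w"
    using DERIV_pos_inc_left by blast
  define h where "h = min (r'/2) ((w - (a+e))/2)"
  have "0 < h" "h < r'" "a + e \<le> w - h"
    using r'(1) \<open>a + e < w\<close> by (auto simp: h_def min_def field_simps)
  moreover from this have "g (w - h) < k" using r'(2) gw by simp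
  ultimately have "w - h \<in> S" using w by (auto simp: S_def)
  then show False using w_least \<open>0 < h\<close> unfolding w_def by force
qed

locale continuous_density =
  fixes F f :: "real \<Rightarrow> real"
  assumes f_pos: "\<forall>v\<in>{0<..<1}. f v > 0"
    and f_cont: "continuous_on {0<..<1} f"
    and f_integrable: "set_integrable lborel {0<..<1} f"
    and f_total: "(LBINT v:{0<..<1}. f v) = 1"
    and F_eq: "\<forall>v. F v = (LBINT u:{0<..<1} \<inter> {..v}. f u)"
begin

lemma F_nonpos: "v \<le> 0 \<Longrightarrow> F v = 0"
  using F_eq by (simp add: set_lebesgue_integral_def Int_absorb1 disjoint_iff)

lemma F_ge_1: "1 \<le> v \<Longrightarrow> F v = 1"
  using F_eq f_total by (simp add: Int_absorb2 subset_eq)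

lemma integrable_on_01: "f integrable_on {0..1}"
  using set_borel_integral_eq_integral(1)[OF f_integrable]
  by (rule integrable_spike_set) (auto intro: negligible_subset[of "{0,1}"])

lemma F_eq_integral:
  assumes "v \<in> {0..1}"
  shows "F v = integral {0..v} f"
proof -
  have "set_integrable lborel ({0<..<1} \<inter> {..v}) f"
    by (rule set_integrable_subset[OF f_integrable]) auto
  then have "F v = integral ({0<..<1} \<inter> {..v}) f"
    using F_eq set_borel_integral_eq_integral(2) by simp
  also have "\<dots> = integral {0..v} f"
    by (rule integral_spike_set; rule negligible_subset[of "{0,1}"]) (use assms in auto)
  finally show ?thesis .
qed

lemma continuous_on_F: "continuous_on {0..1} F"
  using indefinite_integral_continuous_1[OF integrable_on_01]
  by (rule continuous_on_eq) (simp add: F_eq_integral)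

lemma has_real_derivative_F:
  assumes v: "v \<in> {0<..<1}"
  shows "(F has_real_derivative f v) (at v)"
proof -
  have "isCont f v"
    using f_cont v by (simp add: continuous_on_eq_continuous_at)
  then have "((\<lambda>u. integral {0..u} f) has_real_derivative f v) (at v within {0..1})"
    using integral_has_vector_derivative_continuous_at[OF integrable_on_01, of v "{}"] v
    by (simp add: has_real_derivative_iff_has_vector_derivative continuous_at_imp_continuous_within)
  then have "((\<lambda>u. integral {0..u} f) has_real_derivative f v) (at v)"
    using v by (simp add: at_within_Icc_at)
  then show ?thesis
    by (rule has_field_derivative_transform_within_open[of _ _ _ "{0<..<1}"])
       (use v in \<open>auto simp: F_eq_integral\<close>)
qed

lemma F_strict_mono:
  assumes "0 \<le> a" "a < b" "b \<le> 1"
  shows "F a < F b"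
proof (rule DERIV_pos_imp_increasing_open[OF \<open>a < b\<close>])
  fix x assume "a < x" "x < b"
  then have "x \<in> {0<..<1}" using assms by auto
  then show "\<exists>y. (F has_real_derivative y) (at x) \<and> 0 < y"
    using has_real_derivative_F f_pos by blast
qed (use assms in \<open>auto intro: continuous_on_subset[OF continuous_on_F]\<close>)

lemma F_less_1: "v < 1 \<Longrightarrow> F v < 1"
  using F_nonpos F_strict_mono[of v 1] F_ge_1[of 1] by (cases "v \<le> 0") auto

lemma F_le_1: "F v \<le> 1"
  by (metis F_ge_1 F_less_1 less_eq_real_def not_le)

end

locale monopoly_pricing = continuous_density +
  fixes c :: real
  assumes c_pos: "0 < c"
    and f_differentiable: "\<forall>v\<in>{0<..<1}. f differentiable (at v)"
    and virt_deriv_pos: "\<forall>v\<in>{0<..<1}. virt F f v > 0 \<longrightarrow> deriv (virt F f) v > 0"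
begin

abbreviation optimal_price :: "real \<Rightarrow> real \<Rightarrow> bool" where
  "optimal_price q p \<equiv> \<forall>p'. profit c F q p' \<le> profit c F q p"

lemma profit_pos: "c < p \<Longrightarrow> p < q \<Longrightarrow> 0 < profit c F q p"
  using F_less_1[of "p/q"] c_pos by (simp add: profit_def)

lemma profit_nonpos:
  assumes "0 < q" "\<not> (c < p \<and> p < q)"
  shows "profit c F q p \<le> 0"
proof (cases "p \<le> c")
  case True
  then show ?thesis using F_le_1[of "p/q"] by (simp add: profit_def mult_nonpos_nonneg)
next
  case False
  then have "1 \<le> p/q" using assms by simp
  then show ?thesis by (simp add: profit_def F_ge_1)
qed

lemma continuous_on_profit:
  assumes "c < q"
  shows "continuous_on {c..q} (profit c F q)"
proof -
  have "continuous_on {c..q} (\<lambda>p. F (p/q))"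
    by (rule continuous_on_compose2[OF continuous_on_F])
       (use assms c_pos in \<open>auto intro!: continuous_intros simp: field_simps\<close>)
  then show ?thesis unfolding profit_def by (intro continuous_intros)
qed

lemma optimal_price_bounds:
  assumes q: "c < q" and opt: "optimal_price q p"
  shows "c < p \<and> p < q"
proof (rule ccontr)
  assume "\<not> (c < p \<and> p < q)"
  then have "profit c F q p \<le> 0" using profit_nonpos q c_pos by simp
  moreover have "0 < profit c F q ((c+q)/2)" using profit_pos q by simp
  ultimately show False using opt by (meson less_le_trans not_le)
qed

lemma optimal_price_exists:
  assumes q: "c < q"
  shows "\<exists>p. optimal_price q p"
proof -
  obtain p where p: "\<forall>y\<in>{c..q}. profit c F q y \<le> profit c F q p"
    using continuous_attains_sup[of "{c..q}" "profit c F q"] continuous_on_profit[OF q] q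
    by auto
  have "profit c F q y \<le> profit c F q p" for y
  proof (cases "y \<in> {c..q}")
    case False
    then have "profit c F q y \<le> 0" by (intro profit_nonpos) (use q c_pos in auto)
    also have "0 < profit c F q ((c+q)/2)" using profit_pos q by simp
    also have "\<dots> \<le> profit c F q p" using p q by simp
    finally show ?thesis by simp
  qed (use p in blast)
  then show ?thesis by blast
qed

lemma virt_at_optimal_price:
  assumes q: "c < q" and opt: "optimal_price q p"
  shows "virt F f (p/q) = c/q"
proof -
  have p: "c < p" "p < q" using optimal_price_bounds[OF q opt] by auto
  then have v: "p/q \<in> {0<..<1}" using c_pos by auto
  have "((\<lambda>p. F (p/q)) has_real_derivative f (p/q) * (1/q)) (at p)"
    by (rule DERIV_chain2[OF has_real_derivative_F[OF v] DERIV_cdivide[OF DERIV_ident]])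
  then have "(profit c F q has_real_derivative
      (1 - 0) * (1 - F (p/q)) + (0 - f (p/q) * (1/q)) * (p - c)) (at p)"
    unfolding profit_def by (intro DERIV_mult DERIV_diff DERIV_ident DERIV_const)
  then have "(1 - 0) * (1 - F (p/q)) + (0 - f (p/q) * (1/q)) * (p - c) = 0"
    by (rule DERIV_local_max[of _ _ _ 1]) (use opt in auto)
  then have foc: "1 - F (p/q) = f (p/q) * (p - c) / q" by (simp add: field_simps)
  have "0 < f (p/q)" using f_pos v by blast
  then show ?thesis using q c_pos by (simp add: virt_def rr_def foc field_simps)
qed

lemma has_real_derivative_virt:
  assumes v: "v \<in> {0<..<1}"
  shows "(virt F f has_real_derivative deriv (virt F f) v) (at v)"
proof -
  have "F differentiable (at v)"
    using has_real_derivative_F[OF v] real_differentiable_def by blast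
  moreover have "f differentiable (at v)" using f_differentiable v by simp
  moreover have "0 < f v" using f_pos v by blast
  ultimately have "virt F f differentiable (at v)"
    unfolding virt_def[abs_def] rr_def
    by (intro differentiable_diff differentiable_divide differentiable_const differentiable_ident)
       simp_all
  then show ?thesis by (simp add: DERIV_deriv_iff_real_differentiable)
qed

text \<open>Two optimal prices would be two solutions of the first-order condition
  \<open>\<psi>(p/q) = c/q\<close>, but \<open>\<psi>\<close> crosses the positive level \<open>c/q\<close> only upward.\<close>
lemma optimal_price_unique:
  assumes q: "c < q" and "optimal_price q p1" "optimal_price q p2"
  shows "p1 = p2"
proof -
  have "p1 = p2" if opt1: "optimal_price q p1" and opt2: "optimal_price q p2" and "p1 \<le> p2"
    for p1 p2
  proof -
    have "0 < p1/q" "p2/q < 1"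
      using optimal_price_bounds[OF q opt1] optimal_price_bounds[OF q opt2] q c_pos by auto
    then have sub: "{p1/q..p2/q} \<subseteq> {0<..<1}" by auto
    have "p1/q = p2/q"
    proof (rule upcrossing_unique[where g = "virt F f" and k = "c/q"])
      show "p1/q \<le> p2/q" using \<open>p1 \<le> p2\<close> q c_pos by (simp add: divide_right_mono)
      show "continuous_on {p1/q..p2/q} (virt F f)"
        using sub has_real_derivative_virt DERIV_isCont
        by (intro continuous_at_imp_continuous_on) blast
      show "virt F f (p1/q) = c/q" "virt F f (p2/q) = c/q"
        using virt_at_optimal_price[OF q] opt1 opt2 by auto
      show "\<exists>d>0. (virt F f has_real_derivative d) (at v)"
        if "v \<in> {p1/q..p2/q}" "virt F f v = c/q" for v
      proof -
        have "v \<in> {0<..<1}" using that(1) sub by blast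
        then show ?thesis
          using has_real_derivative_virt virt_deriv_pos that(2) q c_pos by force
      qed
    qed
    then show "p1 = p2" using q c_pos by simp
  qed
  then show ?thesis using assms by (metis linorder_le_cases)
qed

lemma price_optimal: "c < q \<Longrightarrow> optimal_price q (price c F q)"
  unfolding price_def by (rule theI') (use optimal_price_exists optimal_price_unique in blast)

lemma RR_strict_mono: "strict_mono_on {c<..} (RR c F)"
proof (rule strict_mono_onI)
  fix q q' assume "q \<in> {c<..}" "q' \<in> {c<..}" "q < q'"
  then have q: "c < q" "q < q'" by auto
  define p where "p = price c F q"
  have p: "c < p" "p < q"
    using optimal_price_bounds[OF q(1) price_optimal[OF q(1)]] by (auto simp: p_def)
  have "F (p/q') < F (p/q)"
    by (rule F_strict_mono) (use p q c_pos in \<open>auto simp: field_simps\<close>)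
  then have "RR c F q < profit c F q' p"
    using p by (simp add: RR_def p_def profit_def)
  also have "\<dots> \<le> RR c F q'"
    using price_optimal q unfolding RR_def by auto
  finally show "RR c F q < RR c F q'" .
qed

end

lemma dist_on_AE_mem:
  assumes "dist_on {a..b} N"
  shows "AE q in N. q \<in> {a..b}"
proof -
  interpret prob_space N using assms by (simp add: dist_on_def)
  have "{a..b} \<in> events" using assms by (simp add: dist_on_def)
  moreover have "prob {a..b} = 1" using assms by (simp add: dist_on_def emeasure_eq_measure)
  ultimately show ?thesis using AE_in_set_eq_1 by blast
qed

lemma integrable_dist_on:
  assumes "dist_on {a..b} N"
  shows "integrable N (\<lambda>q. q)"
proof -
  interpret prob_space N using assms by (simp add: dist_on_def)
  have sets_N: "sets N = sets borel" using assms by (simp add: dist_on_def)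
  have "AE q in N. norm q \<le> max \<bar>a\<bar> \<bar>b\<bar>"
    using dist_on_AE_mem[OF assms] by eventually_elim auto
  moreover have "(\<lambda>q. q) \<in> borel_measurable N" by (simp add: measurable_cong_sets[OF sets_N refl])
  ultimately show ?thesis by (rule integrable_const_bound)
qed

lemma pmean_dist_on:
  assumes "dist_on {a..b} N"
  shows "pmean N \<in> {a..b}"
proof -
  interpret prob_space N using assms by (simp add: dist_on_def)
  have "AE q in N. a \<le> q" "AE q in N. q \<le> b"
    using dist_on_AE_mem[OF assms] by (eventually_elim, simp)+
  then have "a \<le> pmean N" "pmean N \<le> b"
    unfolding pmean_def using integrable_dist_on[OF assms]
    by (auto intro: integral_ge_const integral_le_const)
  then show ?thesis by simp
qed

lemma borel_measurable_pmean_kernel: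
  assumes "K \<in> M \<rightarrow>\<^sub>M subprob_algebra borel"
  shows "(\<lambda>x. pmean (K x)) \<in> borel_measurable M"
  unfolding pmean_def
  by (rule measurable_compose[OF assms integral_measurable_subprob_algebra]) simp

text \<open>Integrals over a bind need a bounded integrand, so the identity is replaced by its
  clipping to \<open>[a, b]\<close>, which agrees with it almost everywhere on every component.\<close>
lemma pmean_bind:
  assumes M: "finite_measure M" "space M \<noteq> {}"
    and K: "K \<in> M \<rightarrow>\<^sub>M subprob_algebra borel"
    and K_on: "\<forall>x\<in>space M. dist_on {a..b} (K x)"
  shows "pmean (M \<bind> K) = (\<integral>x. pmean (K x) \<partial>M)"
proof -
  define clip where "clip q = max a (min b q)" for q :: real
  have clip_measurable: "clip \<in> borel_measurable borel" unfolding clip_def by simp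
  have pmean_clip: "pmean N = (\<integral>q. clip q \<partial>N)"
    if sets_N: "sets N = sets borel" and "AE q in N. q \<in> {a..b}" for N
    unfolding pmean_def
    by (intro integral_cong_AE)
       (use that(2) clip_measurable in \<open>auto simp: clip_def measurable_cong_sets[OF sets_N refl]\<close>)
  have "AE x in M. AE q in K x. q \<in> {a..b}"
    using K_on by (intro AE_I2[of M]) (blast intro: dist_on_AE_mem)
  then have "AE q in M \<bind> K. q \<in> {a..b}"
    by (subst AE_bind[OF K]) simp_all
  then have "pmean (M \<bind> K) = (\<integral>q. clip q \<partial>(M \<bind> K))"
    using pmean_clip sets_bind_measurable[OF K M(2)] by simp
  also have "\<dots> = (\<integral>x. (\<integral>q. clip q \<partial>K x) \<partial>M)"
  proof (rule integral_bind[OF clip_measurable _ K M(1), where B = "max \<bar>a\<bar> \<bar>b\<bar>" and B' = 1])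
    show "\<bar>clip q\<bar> \<le> max \<bar>a\<bar> \<bar>b\<bar>" for q by (simp add: clip_def)
    show "AE x in M. emeasure (K x) (space (K x)) \<le> ennreal 1"
      by (intro AE_I2) (simp add: subprob_space.subprob_emeasure_le_1 subprob_space_kernel[OF K])
  qed
  also have "\<dots> = (\<integral>x. pmean (K x) \<partial>M)"
    using K_on pmean_clip dist_on_AE_mem
    by (intro Bochner_Integration.integral_cong) (auto simp: dist_on_def)
  finally show ?thesis .
qed

lemma pmean_cond_mixture:
  assumes nu: "prob_space \<nu>" and K: "K \<in> \<nu> \<rightarrow>\<^sub>M subprob_algebra borel"
    and K_on: "\<forall>x\<in>space \<nu>. dist_on {a..b} (K x)"
    and D: "D \<in> sets \<nu>" "0 < emeasure \<nu> D"
  shows "pmean (cond_mixture \<nu> K D) * measure \<nu> D = (LINT x:D|\<nu>. pmean (K x))"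
proof -
  interpret prob_space \<nu> by (rule nu)
  define m where "m = measure \<nu> D"
  have m_pos: "0 < m" using D by (simp add: m_def emeasure_eq_measure)
  define w where "w x = indicator D x / m" for x
  have w_measurable: "w \<in> borel_measurable \<nu>" unfolding w_def using D(1) by measurable
  have w_nonneg: "0 \<le> w x" for x using m_pos by (simp add: w_def)
  have "integrable \<nu> w" unfolding w_def using D(1) by (simp add: emeasure_eq_measure)
  have "emeasure (density \<nu> w) (space \<nu>) = (\<integral>\<^sup>+x. ennreal (w x) \<partial>\<nu>)"
    by (subst emeasure_density)
       (auto intro!: nn_integral_cong measurable_compose[OF w_measurable measurable_ennreal])
  also have "\<dots> = ennreal (\<integral>x. w x \<partial>\<nu>)"
    using \<open>integrable \<nu> w\<close> w_nonneg by (intro nn_integral_eq_integral) auto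
  finally have fin: "finite_measure (density \<nu> w)" by (intro finite_measureI) simp
  have "(\<lambda>x. indicator D x / emeasure \<nu> D) = (\<lambda>x. ennreal (w x))"
    using m_pos by (auto simp: w_def m_def emeasure_eq_measure divide_ennreal[symmetric]
        split: split_indicator)
  then have "pmean (cond_mixture \<nu> K D) = pmean (density \<nu> w \<bind> K)"
    by (simp add: cond_mixture_def)
  also have "\<dots> = (\<integral>x. pmean (K x) \<partial>density \<nu> w)"
    by (rule pmean_bind[OF fin])
       (use K K_on in \<open>simp_all add: measurable_cong_sets[OF sets_density refl] not_empty\<close>)
  also have "\<dots> = (\<integral>x. w x * pmean (K x) \<partial>\<nu>)"
    using w_measurable borel_measurable_pmean_kernel[OF K] m_pos
    by (subst integral_density) (auto simp: w_def)
  also have "\<dots> = (LINT x:D|\<nu>. pmean (K x)) / m"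
    by (simp add: w_def set_lebesgue_integral_def)
  finally show ?thesis using m_pos by (simp add: m_def)
qed

lemma AE_eq_bound_of_set_integral_eq:
  fixes h :: "'a \<Rightarrow> real"
  assumes "finite_measure M" and D: "D \<in> sets M" and h: "set_integrable M D h"
    and le: "\<forall>x\<in>D. h x \<le> m" and int_eq: "(LINT x:D|M. h x) = m * measure M D"
  shows "AE x in M. x \<in> D \<longrightarrow> h x = m"
proof -
  interpret finite_measure M by fact
  define u where "u x = m * indicator D x - indicator D x * h x" for x
  have int_u: "integrable M u"
    unfolding u_def using D h by (simp add: set_integrable_def emeasure_eq_measure)
  have "integral\<^sup>L M u = 0"
    unfolding u_def using D h int_eq
    by (simp add: set_integrable_def set_lebesgue_integral_def emeasure_eq_measure)
  moreover have "AE x in M. 0 \<le> u x"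
    using le by (intro AE_I2) (simp add: u_def indicator_def)
  ultimately have "AE x in M. u x = 0"
    using integral_nonneg_eq_0_iff_AE[OF int_u] by simp
  then show ?thesis by eventually_elim (auto simp: u_def)
qed

lemma equilibrium_pmean_message:
  assumes "equilibrium c F Q mu SX piS K sig muB" "x \<in> space SX"
  shows "pmean (muB (sig x)) = (if sig x = None then pmean (muB None) else pmean (K x))"
  using assms by (cases "sig x") (auto simp: equilibrium_def disclosure_strategy_def)

lemma full_disclosure_equilibrium:
  assumes "mono_on {ql..qh} (RR c F)" "ql \<le> qh" "\<forall>x\<in>space SX. dist_on {ql..qh} (K x)"
  shows "equilibrium c F {ql..qh} mu SX piS K Some (case_option (return borel ql) K)"
proof -
  have "pmean (return borel ql) = ql" unfolding pmean_def by (rule integral_return) simp_all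
  moreover have "RR c F ql \<le> RR c F (pmean (K x))" if "x \<in> space SX" for x
  proof (rule mono_onD[OF assms(1)])
    show "pmean (K x) \<in> {ql..qh}" using assms(3) that pmean_dist_on by blast
    then show "ql \<in> {ql..qh}" "ql \<le> pmean (K x)" by auto
  qed
  ultimately show ?thesis
    using assms(2) by (auto simp: equilibrium_def disclosure_strategy_def dist_on_def
        prob_space_return max_absorb1)
qed

locale disclosure_game =
  fixes c ql qh :: real and F :: "real \<Rightarrow> real" and mu :: "real measure"
    and SX :: "'x measure" and piS :: "real \<Rightarrow> 'x measure" and K :: "'x \<Rightarrow> real measure"
  assumes RR_mono: "strict_mono_on {ql..qh} (RR c F)"
    and nu: "prob_space (signal_dist mu piS)" and sets_nu: "sets (signal_dist mu piS) = sets SX"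
    and K: "K \<in> SX \<rightarrow>\<^sub>M subprob_algebra borel"
    and K_on: "\<forall>x\<in>space SX. dist_on {ql..qh} (K x)"
begin

lemma equilibrium_concealed_pmean_le:
  assumes eq: "equilibrium c F {ql..qh} mu SX piS K sig muB"
    and x: "x \<in> space SX" "sig x = None"
  shows "pmean (K x) \<le> pmean (muB None)"
proof -
  have "RR c F (pmean (muB None)) = max (RR c F (pmean (K x))) (RR c F (pmean (muB None)))"
    using eq x by (auto simp: equilibrium_def)
  then have "RR c F (pmean (K x)) \<le> RR c F (pmean (muB None))" by (simp add: max_def split: if_splits)
  moreover have "pmean (K x) \<in> {ql..qh}" "pmean (muB None) \<in> {ql..qh}"
    using K_on x eq pmean_dist_on by (auto simp: equilibrium_def)
  ultimately show ?thesis using strict_mono_on_less_eq[OF RR_mono] by blast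
qed

lemma equilibrium_AE_pmean_eq:
  assumes eq: "equilibrium c F {ql..qh} mu SX piS K sig muB"
  shows "AE x in signal_dist mu piS. pmean (muB (sig x)) = pmean (K x)"
proof -
  let ?\<nu> = "signal_dist mu piS"
  interpret prob_space ?\<nu> by (rule nu)
  define D where "D = {x \<in> space SX. sig x = None}"
  have space_nu: "space ?\<nu> = space SX" using sets_nu by (rule sets_eq_imp_space_eq)
  have D_sets: "D \<in> sets ?\<nu>"
    using eq sets_nu by (simp add: D_def equilibrium_def disclosure_strategy_def)
  have K_nu: "K \<in> ?\<nu> \<rightarrow>\<^sub>M subprob_algebra borel"
    using K by (simp add: measurable_cong_sets[OF sets_nu refl])
  have "AE x in ?\<nu>. x \<in> D \<longrightarrow> pmean (K x) = pmean (muB None)"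
  proof (cases "emeasure ?\<nu> D = 0")
    case True
    then have "AE x in ?\<nu>. x \<notin> D" using D_sets by (intro AE_not_in null_setsI)
    then show ?thesis by eventually_elim simp
  next
    case False
    then have "muB None = cond_mixture ?\<nu> K D"
      using eq by (simp add: equilibrium_def D_def Let_def zero_less_iff_neq_zero)
    then have "(LINT x:D|?\<nu>. pmean (K x)) = pmean (muB None) * measure ?\<nu> D"
      using pmean_cond_mixture[OF nu K_nu _ D_sets] K_on False space_nu
      by (simp add: zero_less_iff_neq_zero)
    moreover have "integrable ?\<nu> (\<lambda>x. pmean (K x))"
      using K_on pmean_dist_on space_nu borel_measurable_pmean_kernel[OF K_nu]
      by (intro integrable_const_bound[where B = "max \<bar>ql\<bar> \<bar>qh\<bar>"] AE_I2) force+
    then have "set_integrable ?\<nu> D (\<lambda>x. pmean (K x))"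
      unfolding set_integrable_def using D_sets by (rule integrable_mult_indicator[rotated])
    ultimately show ?thesis
      using equilibrium_concealed_pmean_le[OF eq] D_sets
      by (intro AE_eq_bound_of_set_integral_eq) (auto simp: D_def)
  qed
  then show ?thesis
  proof (rule AE_mp, intro AE_I2 impI)
    fix x assume "x \<in> space ?\<nu>" "x \<in> D \<longrightarrow> pmean (K x) = pmean (muB None)"
    then show "pmean (muB (sig x)) = pmean (K x)"
      using equilibrium_pmean_message[OF eq] space_nu by (auto simp: D_def)
  qed
qed

lemma equilibrium_distr_pmean_eq_seller_means:
  assumes eq: "equilibrium c F {ql..qh} mu SX piS K sig muB"
  shows "distr (signal_dist mu piS) borel (\<lambda>x. pmean (muB (sig x))) = seller_means mu piS K"
proof -
  have "{x \<in> space SX. sig x = None} \<in> sets SX"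
    using eq by (simp add: equilibrium_def disclosure_strategy_def)
  then have "(\<lambda>x. if sig x = None then pmean (muB None) else pmean (K x)) \<in> borel_measurable SX"
    using borel_measurable_pmean_kernel[OF K] by measurable
  then have "(\<lambda>x. pmean (muB (sig x))) \<in> borel_measurable SX"
    by (rule measurable_cong[THEN iffD1, rotated]) (simp add: equilibrium_pmean_message[OF eq])
  then show ?thesis
    unfolding seller_means_def
    using equilibrium_AE_pmean_eq[OF eq] borel_measurable_pmean_kernel[OF K]
    by (intro distr_cong_AE) (simp_all add: measurable_cong_sets[OF sets_nu refl])
qed

end

theorem proposition6:
  fixes ql qh c :: real
    and F f :: "real \<Rightarrow> real"
    and mu :: "real measure"
    and SX :: "'x measure"
    and piS :: "real \<Rightarrow> 'x measure"
    and K :: "'x \<Rightarrow> real measure"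
  assumes "0 < ql" and "ql < qh" and "0 < c" and "c < ql"
    and f_pos: "\<forall>v\<in>{0<..<1}. f v > 0"
    and f_C2: "\<exists>f' f''. (\<forall>v\<in>{0<..<1}. (f has_real_derivative f' v) (at v) \<and>
                                   (f' has_real_derivative f'' v) (at v))
                     \<and> continuous_on {0<..<1} f''"
    and f_dens: "set_integrable lborel {0<..<1} f" "(LBINT v:{0<..<1}. f v) = 1"
    and F_cdf: "\<forall>v. F v = (LBINT u:{0<..<1} \<inter> {..v}. f u)"
    and psi_mono: "\<forall>v\<in>{0<..<1}. virt F f v > 0 \<longrightarrow> deriv (virt F f) v > 0"
    and mu_prob: "prob_space mu" and mu_sets: "sets mu = sets borel"
    and mu_supp: "measure_support mu = {ql..qh}"
    and pi_kernel: "piS \<in> measurable borel (prob_algebra SX)"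
    and K_post: "bayes_posterior mu SX piS K"
    and K_Q: "\<forall>x\<in>space SX. dist_on {ql..qh} (K x)"
  shows "(\<exists>sig muB. equilibrium c F {ql..qh} mu SX piS K sig muB) \<and>
         (\<forall>sig muB. equilibrium c F {ql..qh} mu SX piS K sig muB \<longrightarrow>
            distr (signal_dist mu piS) borel (\<lambda>x. pmean (muB (sig x))) = seller_means mu piS K)"
proof -
  have f_differentiable: "\<forall>v\<in>{0<..<1}. f differentiable (at v)"
    using f_C2 by (auto simp: real_differentiable_def)
  then have "continuous_on {0<..<1} f"
    by (intro differentiable_imp_continuous_on differentiable_at_imp_differentiable_on) simp
  then interpret monopoly_pricing F f c
    using assms f_differentiable by unfold_locales auto
  have RR_mono: "strict_mono_on {ql..qh} (RR c F)"
    using RR_strict_mono by (rule monotone_on_subset) (use \<open>c < ql\<close> in auto)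
  have mu: "mu \<in> space (prob_algebra borel)"
    using mu_prob mu_sets by (simp add: space_prob_algebra)
  have "prob_space (signal_dist mu piS)" "sets (signal_dist mu piS) = sets SX"
    unfolding signal_dist_def using prob_space_bind' sets_bind' mu pi_kernel by blast+
  moreover have "K \<in> SX \<rightarrow>\<^sub>M subprob_algebra borel"
    using K_post by (simp add: bayes_posterior_def measurable_prob_algebraD)
  ultimately interpret disclosure_game c ql qh F mu SX piS K
    using RR_mono K_Q by (simp add: disclosure_game_def)
  show ?thesis
    using full_disclosure_equilibrium[OF strict_mono_on_imp_mono_on[OF RR_mono] _ K_Q]
      equilibrium_distr_pmean_eq_seller_means \<open>ql < qh\<close>
    by (meson less_imp_le)
qed

end
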